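(* Let $K_n$ be the complete graph on $n$ vertices and $M_k$ a matching of $K_n$ with $k$ edges, and let $K_n\setminus M_k$ be the graph obtained by deleting the edges of $M_k$. Then $K(K_n\setminus M_k)\cong \mathbb{Z}_n^{\,n-2k-2}\oplus \mathbb{Z}_{n(n-2)}^{\,k}$ if $n\ge 2k+2$, and $K(K_n\setminus M_k)\cong \mathbb{Z}_{n-2}\oplus\mathbb{Z}_{n(n-2)}^{\,k-1}$ if $n=2k+1$.
   Context: For a connected graph $G$, the Laplacian matrix $L(G)$ has $(u,u)$-entry the degree of $u$ and $(u,v)$-entry $-m_{uv}$ (minus the number of edges between $u$ and $v$) for $u\ne v$. For a vertex $s$, $L(G,s)$ is $L(G)$ with row and column $s$ deleted, and the critical group is $K(G)=\mathbb{Z}^{V(G)\setminus s}/\mathrm{Im}\,L(G,s)$ (independent of $s$ up to isomorphism). $\mathbb{Z}_d^{\,r}$ denotes the direct sum of $r$ copies of $\mathbb{Z}/d\mathbb{Z}$. *)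

theory Defs
  imports "HOL-Algebra.Product_Groups" "HOL-Algebra.Elementary_Groups"
begin

text \<open>Laplacian of a (multi)graph on a finite vertex set V with edge multiplicity
  function m (m u v = number of edges between u and v, for u \<noteq> v).\<close>
definition laplacian :: "'a set \<Rightarrow> ('a \<Rightarrow> 'a \<Rightarrow> nat) \<Rightarrow> 'a \<Rightarrow> 'a \<Rightarrow> int" where
  "laplacian V m u v =
     (if u = v then int (\<Sum>w\<in>V - {u}. m u w) else - int (m u v))"

definition lattice_group :: "'a set \<Rightarrow> 'a \<Rightarrow> ('a \<Rightarrow> int) monoid" where
  "lattice_group V s = product_group (V - {s}) (\<lambda>_. integer_group)"

definition reduced_laplacian_map :: "'a set \<Rightarrow> ('a \<Rightarrow> 'a \<Rightarrow> nat) \<Rightarrow> 'a \<Rightarrow> ('a \<Rightarrow> int) \<Rightarrow> ('a \<Rightarrow> int)" where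
  "reduced_laplacian_map V m s x = (\<lambda>u\<in>V - {s}. \<Sum>v\<in>V - {s}. laplacian V m u v * x v)"

definition critical_group :: "'a set \<Rightarrow> ('a \<Rightarrow> 'a \<Rightarrow> nat) \<Rightarrow> 'a \<Rightarrow> ('a \<Rightarrow> int) set monoid" where
  "critical_group V m s =
     lattice_group V s Mod (reduced_laplacian_map V m s ` carrier (lattice_group V s))"

definition is_matching :: "nat \<Rightarrow> nat set set \<Rightarrow> bool" where
  "is_matching n M \<longleftrightarrow>
     (\<forall>e\<in>M. e \<subseteq> {0..<n} \<and> card e = 2) \<and>
     (\<forall>e\<in>M. \<forall>f\<in>M. e \<noteq> f \<longrightarrow> e \<inter> f = {})"

definition complete_minus_matching :: "nat set set \<Rightarrow> nat \<Rightarrow> nat \<Rightarrow> nat" where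
  "complete_minus_matching M u v = (if u \<noteq> v \<and> {u, v} \<notin> M then 1 else 0)"

definition cyclic_sum :: "nat \<Rightarrow> nat \<Rightarrow> nat \<Rightarrow> nat \<Rightarrow> (nat \<Rightarrow> int) monoid" where
  "cyclic_sum d1 r1 d2 r2 =
     product_group {..<r1 + r2}
       (\<lambda>i. if i < r1 then integer_mod_group d1 else integer_mod_group d2)"

end

theory Submission
  imports Defs
begin

text \<open>Label the vertices missed by the matching \<open>w\<^sub>0, \<dots>, w\<^sub>r\<^sub>-\<^sub>1\<close> (\<open>r = n - 2k\<close>) and the
  matching edges \<open>{a\<^sub>i, b\<^sub>i}\<close>. The Laplacian acts as \<open>y \<mapsto> n y - \<Sum>y\<close> at the \<open>w\<^sub>j\<close> and by the block
  \<open>[[n-1, 1], [1, n-1]]\<close> of determinant \<open>n(n-2)\<close> (minus \<open>\<Sum>y\<close>) on each matched pair. Hence a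
  zero-sum vector \<open>x\<close> lies in its image iff for some \<open>c\<close> all \<open>x(w\<^sub>j) \<equiv> c (mod n)\<close> and all
  \<open>(n-1)(x(b\<^sub>i)-c) - (x(a\<^sub>i)-c) \<equiv> 0 (mod n(n-2))\<close>; because \<open>\<Sum>x = 0\<close>, one of the unmatched
  congruences follows from the others. For \<open>r \<ge> 2\<close> take \<open>c = x(w\<^sub>r\<^sub>-\<^sub>2)\<close>: the remaining \<open>r - 2\<close>
  congruences mod \<open>n\<close> and \<open>k\<close> mod \<open>n(n-2)\<close> are independent coordinates of \<open>K\<close>. For \<open>r = 1\<close>,
  \<open>c\<close> is only seen through \<open>f\<^sub>i = x(a\<^sub>i) - (n-1) x(b\<^sub>i) \<equiv> -(n-2)c (mod n(n-2))\<close>, which leaves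
  \<open>f\<^sub>0 mod (n-2)\<close> and \<open>f\<^sub>i - f\<^sub>0 mod n(n-2)\<close> for \<open>0 < i < k\<close>.\<close>

definition laplacian_map :: "'a set \<Rightarrow> ('a \<Rightarrow> 'a \<Rightarrow> nat) \<Rightarrow> ('a \<Rightarrow> int) \<Rightarrow> 'a \<Rightarrow> int" where
  "laplacian_map V m y u = (\<Sum>v\<in>V. laplacian V m u v * y v)"

definition sum_zero_extension :: "'a set \<Rightarrow> 'a \<Rightarrow> ('a \<Rightarrow> int) \<Rightarrow> 'a \<Rightarrow> int" where
  "sum_zero_extension V s x v = (if v = s then - (\<Sum>w\<in>V - {s}. x w) else x v)"

lemma laplacian_sym:
  "(\<And>u v. m u v = m v u) \<Longrightarrow> laplacian V m u v = laplacian V m v u"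
  by (auto simp: laplacian_def)

lemma sum_laplacian_row:
  assumes "finite V" "u \<in> V"
  shows "(\<Sum>v\<in>V. laplacian V m u v) = 0"
proof -
  have "(\<Sum>v\<in>V. laplacian V m u v) = laplacian V m u u + (\<Sum>v\<in>V - {u}. laplacian V m u v)"
    using assms by (simp add: sum.remove)
  also have "(\<Sum>v\<in>V - {u}. laplacian V m u v) = (\<Sum>v\<in>V - {u}. - int (m u v))"
    by (rule sum.cong) (auto simp: laplacian_def)
  finally show ?thesis by (simp add: laplacian_def sum_negf)
qed

lemma laplacian_map_diff_const:
  assumes "finite V" "u \<in> V"
  shows "laplacian_map V m (\<lambda>v. y v - c) u = laplacian_map V m y u"
proof -
  have "laplacian_map V m (\<lambda>v. y v - c) u = laplacian_map V m y u - (\<Sum>v\<in>V. laplacian V m u v) * c"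
    by (simp add: laplacian_map_def algebra_simps sum_subtractf sum_distrib_left)
  then show ?thesis using sum_laplacian_row[OF assms] by simp
qed

lemma sum_laplacian_map:
  assumes "finite V" and "\<And>u v. m u v = m v u"
  shows "sum (laplacian_map V m y) V = 0"
proof -
  have "sum (laplacian_map V m y) V = (\<Sum>v\<in>V. (\<Sum>u\<in>V. laplacian V m v u) * y v)"
    unfolding laplacian_map_def
    by (subst sum.swap) (simp add: sum_distrib_right laplacian_sym[OF assms(2)])
  also have "\<dots> = 0" using sum_laplacian_row[OF assms(1)] by (intro sum.neutral) auto
  finally show ?thesis .
qed

lemma laplacian_map_almost_complete:
  assumes fin: "finite V" and u: "u \<in> V" and P: "P \<subseteq> V - {u}"
    and m: "\<And>v. v \<in> V \<Longrightarrow> m u v = (if v \<noteq> u \<and> v \<notin> P then 1 else 0)"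
  shows "laplacian_map V m y u = int (card V) * y u - sum y V - (\<Sum>v\<in>P. y u - y v)"
proof -
  have finP: "finite P" using P fin finite_subset by blast
  have m_off: "int (m u v) * z = (if v \<in> P then 0 else z)" if "v \<in> V - {u}" for v z
    using m that by simp
  have "(\<Sum>w\<in>V - {u}. int (m u w)) = (\<Sum>w\<in>V - {u}. if w \<in> P then 0 else 1)"
    using m_off[of _ 1] by (intro sum.cong) auto
  also have "\<dots> = int (card (V - {u} - P))"
    using fin by (simp add: sum.If_cases Int_Diff Diff_eq[symmetric])
  also have "\<dots> = int (card V) - 1 - int (card P)"
    using P fin u finP card_mono[OF _ P] card_gt_0_iff[of V] by (auto simp: card_Diff_subset)
  finally have deg: "laplacian V m u u = int (card V) - 1 - int (card P)"
    by (simp add: laplacian_def)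
  have "(\<Sum>v\<in>V - {u}. int (m u v) * y v) = (\<Sum>v\<in>V - {u}. if v \<in> P then 0 else y v)"
    using m_off by (intro sum.cong) auto
  also have "\<dots> = sum y (V - {u} - P)"
    using fin by (simp add: sum.If_cases Int_Diff Diff_eq[symmetric])
  also have "\<dots> = sum y V - y u - sum y P"
    using P fin u finP by (simp add: sum_diff sum_diff1)
  finally have adj: "(\<Sum>v\<in>V - {u}. int (m u v) * y v) = sum y V - y u - sum y P" .
  have "laplacian_map V m y u = laplacian V m u u * y u + (\<Sum>v\<in>V - {u}. laplacian V m u v * y v)"
    using fin u by (simp add: laplacian_map_def sum.remove)
  also have "(\<Sum>v\<in>V - {u}. laplacian V m u v * y v) = - (\<Sum>v\<in>V - {u}. int (m u v) * y v)"
    by (simp add: sum_negf[symmetric]) (rule sum.cong, auto simp: laplacian_def)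
  finally show ?thesis
    using deg adj by (simp add: sum_subtractf algebra_simps)
qed

lemma sum_sum_zero_extension:
  assumes "finite V" "s \<in> V"
  shows "sum (sum_zero_extension V s x) V = 0"
proof -
  have "sum (sum_zero_extension V s x) V
      = sum_zero_extension V s x s + sum (sum_zero_extension V s x) (V - {s})"
    using assms by (simp add: sum.remove)
  also have "sum (sum_zero_extension V s x) (V - {s}) = sum x (V - {s})"
    by (rule sum.cong) (auto simp: sum_zero_extension_def)
  finally show ?thesis by (simp add: sum_zero_extension_def)
qed

lemma reduced_laplacian_image_iff:
  assumes fin: "finite V" and sV: "s \<in> V" and sym: "\<And>u v. m u v = m v u"
    and x: "x \<in> carrier (lattice_group V s)"
  shows "x \<in> reduced_laplacian_map V m s ` carrier (lattice_group V s)
    \<longleftrightarrow> (\<exists>y. \<forall>u\<in>V. sum_zero_extension V s x u = laplacian_map V m y u)"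
proof
  assume "x \<in> reduced_laplacian_map V m s ` carrier (lattice_group V s)"
  then obtain z where x_eq: "x = reduced_laplacian_map V m s z" by blast
  define y where "y v = (if v = s then 0 else z v)" for v
  have off_s: "x u = laplacian_map V m y u" if u: "u \<in> V - {s}" for u
    using u fin sV by (simp add: x_eq reduced_laplacian_map_def laplacian_map_def sum.remove y_def)
  have "laplacian_map V m y s + sum (laplacian_map V m y) (V - {s}) = 0"
    using sum_laplacian_map[OF fin sym] fin sV by (simp add: sum.remove)
  moreover have "sum (laplacian_map V m y) (V - {s}) = sum x (V - {s})"
    using off_s by (intro sum.cong) auto
  ultimately have "sum_zero_extension V s x s = laplacian_map V m y s"
    by (simp add: sum_zero_extension_def)
  then have "sum_zero_extension V s x u = laplacian_map V m y u" if "u \<in> V" for u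
    using that off_s[of u] by (cases "u = s") (simp_all add: sum_zero_extension_def)
  then show "\<exists>y. \<forall>u\<in>V. sum_zero_extension V s x u = laplacian_map V m y u" by blast
next
  assume "\<exists>y. \<forall>u\<in>V. sum_zero_extension V s x u = laplacian_map V m y u"
  then obtain y where y: "\<And>u. u \<in> V \<Longrightarrow> sum_zero_extension V s x u = laplacian_map V m y u"
    by blast
  define z where "z = (\<lambda>v\<in>V - {s}. y v - y s)"
  have "x = reduced_laplacian_map V m s z"
  proof (rule extensionalityI[where A = "V - {s}"])
    show "x \<in> extensional (V - {s})"
      using x by (simp add: lattice_group_def PiE_def)
    show "reduced_laplacian_map V m s z \<in> extensional (V - {s})"
      by (simp add: reduced_laplacian_map_def)
    fix u assume u: "u \<in> V - {s}"
    have "reduced_laplacian_map V m s z u = laplacian_map V m (\<lambda>v. y v - y s) u"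
      using u fin sV by (simp add: reduced_laplacian_map_def laplacian_map_def z_def sum.remove)
    also have "\<dots> = x u"
      using u fin y[of u] by (simp add: laplacian_map_diff_const sum_zero_extension_def)
    finally show "x u = reduced_laplacian_map V m s z u" by simp
  qed
  moreover have "z \<in> carrier (lattice_group V s)"
    by (simp add: lattice_group_def z_def)
  ultimately show "x \<in> reduced_laplacian_map V m s ` carrier (lattice_group V s)" by blast
qed

text \<open>Extending by \<open>sum_zero_extension\<close> identifies \<open>\<int>\<^sup>V\<^sup>-\<^sup>{\<^sup>s\<^sup>}\<close> with the zero-sum vectors of
  \<open>\<int>\<^sup>V\<close>, and the image of the reduced Laplacian with the image of the full one; so \<open>K(G)\<close> is
  the group of zero-sum vectors modulo \<open>Im L\<close>.\<close>
lemma critical_group_isoI: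
  fixes \<psi> :: "('a \<Rightarrow> int) \<Rightarrow> 'b"
  assumes fin: "finite V" and sV: "s \<in> V" and sym: "\<And>u v. m u v = m v u" and H: "group H"
    and \<psi>_cong: "\<And>x x'. (\<And>v. v \<in> V \<Longrightarrow> x v = x' v) \<Longrightarrow> \<psi> x = \<psi> x'"
    and \<psi>_carrier: "\<And>x. \<psi> x \<in> carrier H"
    and \<psi>_add: "\<And>x x'. \<psi> (\<lambda>v. x v + x' v) = \<psi> x \<otimes>\<^bsub>H\<^esub> \<psi> x'"
    and \<psi>_surj: "\<And>h. h \<in> carrier H \<Longrightarrow> \<exists>x. sum x V = 0 \<and> \<psi> x = h"
    and \<psi>_kernel: "\<And>x. sum x V = 0 \<Longrightarrow> \<psi> x = \<one>\<^bsub>H\<^esub> \<longleftrightarrow> (\<exists>y. \<forall>u\<in>V. x u = laplacian_map V m y u)"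
  shows "critical_group V m s \<cong> H"
proof -
  define G where "G = lattice_group V s"
  define \<phi> where "\<phi> x = \<psi> (sum_zero_extension V s x)" for x
  have carrier_G: "carrier G = (\<Pi>\<^sub>E v\<in>V - {s}. UNIV)"
    by (simp add: G_def lattice_group_def)
  have "\<phi> \<in> hom G H"
  proof (rule homI)
    fix x y assume "x \<in> carrier G" "y \<in> carrier G"
    have "\<phi> (x \<otimes>\<^bsub>G\<^esub> y)
        = \<psi> (\<lambda>v. sum_zero_extension V s x v + sum_zero_extension V s y v)"
      unfolding \<phi>_def by (rule \<psi>_cong)
        (auto simp: sum_zero_extension_def G_def lattice_group_def sum.distrib)
    then show "\<phi> (x \<otimes>\<^bsub>G\<^esub> y) = \<phi> x \<otimes>\<^bsub>H\<^esub> \<phi> y" by (simp add: \<psi>_add \<phi>_def)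
  qed (simp add: \<psi>_carrier \<phi>_def)
  then interpret group_hom G H \<phi>
    using H by (simp add: group_hom_def group_hom_axioms_def G_def lattice_group_def)
  have "carrier H \<subseteq> \<phi> ` carrier G"
  proof
    fix h assume "h \<in> carrier H"
    then obtain x where x: "sum x V = 0" "\<psi> x = h" using \<psi>_surj by blast
    have "sum_zero_extension V s (restrict x (V - {s})) v = x v" if "v \<in> V" for v
      using that x(1) fin sV by (auto simp: sum_zero_extension_def sum.remove)
    then have "\<phi> (restrict x (V - {s})) = h"
      unfolding \<phi>_def x(2)[symmetric] by (rule \<psi>_cong)
    moreover have "restrict x (V - {s}) \<in> carrier G" by (simp add: carrier_G)
    ultimately show "h \<in> \<phi> ` carrier G" by blast
  qed
  then have \<phi>_image: "\<phi> ` carrier G = carrier H"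
    using \<psi>_carrier by (auto simp: \<phi>_def)
  have kernel_eq: "kernel G H \<phi> = reduced_laplacian_map V m s ` carrier G"
  proof -
    have "reduced_laplacian_map V m s ` carrier G \<subseteq> carrier G"
      unfolding carrier_G reduced_laplacian_map_def by (intro image_subsetI restrict_PiE) simp
    moreover have "\<phi> x = \<one>\<^bsub>H\<^esub> \<longleftrightarrow> x \<in> reduced_laplacian_map V m s ` carrier G"
      if "x \<in> carrier G" for x
      unfolding \<phi>_def \<psi>_kernel[OF sum_sum_zero_extension[OF fin sV]]
      using reduced_laplacian_image_iff[OF fin sV sym that[unfolded G_def]]
      by (simp add: G_def)
    ultimately show ?thesis
      unfolding kernel_def by blast
  qed
  show ?thesis
    using FactGroup_iso[OF \<phi>_image]
    unfolding critical_group_def G_def[symmetric] kernel_eq .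
qed

lemma all_less_add_iff: "(\<forall>t<m + n. P t) \<longleftrightarrow> (\<forall>t<m. P t) \<and> (\<forall>t<n. P (m + t))"
  for m n :: nat
  by (auto, metis add_less_cancel_left le_add_diff_inverse not_less)

lemma dvd_minus_diff_iff: "d dvd - p - q \<longleftrightarrow> d dvd p + q"
  for d p q :: "'a :: comm_ring_1"
  by (metis dvd_minus_iff minus_add_distrib diff_conv_add_uminus)

lemma cyclic_sum_eq:
  "cyclic_sum d1 r1 d2 r2
    = product_group {..<r1 + r2} (\<lambda>t. integer_mod_group (if t < r1 then d1 else d2))"
  unfolding cyclic_sum_def by (rule arg_cong[where f = "product_group _"]) auto

lemma mod_in_carrier_integer_mod_group: "z mod int d \<in> carrier (integer_mod_group d)"
  by (simp add: carrier_integer_mod_group)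

lemma mod_carrier_integer_mod_group:
  "z \<in> carrier (integer_mod_group d) \<Longrightarrow> z mod int d = z"
  by (cases "d = 0") (auto simp: carrier_integer_mod_group)

lemma critical_group_iso_cyclic_sumI:
  fixes f g :: "nat \<Rightarrow> ('a \<Rightarrow> int) \<Rightarrow> int"
  assumes fin: "finite V" and sV: "s \<in> V" and sym: "\<And>u v. m u v = m v u"
    and f_cong: "\<And>t x x'. t < r1 \<Longrightarrow> (\<And>v. v \<in> V \<Longrightarrow> x v = x' v) \<Longrightarrow> f t x = f t x'"
    and g_cong: "\<And>t x x'. t < r2 \<Longrightarrow> (\<And>v. v \<in> V \<Longrightarrow> x v = x' v) \<Longrightarrow> g t x = g t x'"
    and f_add: "\<And>t x x'. t < r1 \<Longrightarrow> f t (\<lambda>v. x v + x' v) = f t x + f t x'"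
    and g_add: "\<And>t x x'. t < r2 \<Longrightarrow> g t (\<lambda>v. x v + x' v) = g t x + g t x'"
    and surj: "\<And>h1 h2. \<exists>x. sum x V = 0 \<and> (\<forall>t<r1. f t x = h1 t) \<and> (\<forall>t<r2. g t x = h2 t)"
    and kernel: "\<And>x. sum x V = 0 \<Longrightarrow>
      (\<forall>t<r1. int d1 dvd f t x) \<and> (\<forall>t<r2. int d2 dvd g t x)
        \<longleftrightarrow> (\<exists>y. \<forall>u\<in>V. x u = laplacian_map V m y u)"
  shows "critical_group V m s \<cong> cyclic_sum d1 r1 d2 r2"
proof (rule critical_group_isoI[OF fin sV sym])
  define D where "D t = (if t < r1 then d1 else d2)" for t
  define F where "F t x = (if t < r1 then f t x else g (t - r1) x)" for t x
  define \<psi> where "\<psi> x = (\<lambda>t\<in>{..<r1 + r2}. F t x mod int (D t))" for x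
  have H: "cyclic_sum d1 r1 d2 r2 = product_group {..<r1 + r2} (\<lambda>t. integer_mod_group (D t))"
    unfolding D_def by (rule cyclic_sum_eq)
  have F_cong: "F t x = F t x'" if "t < r1 + r2" "\<And>v. v \<in> V \<Longrightarrow> x v = x' v" for t x x'
    using that by (auto simp: F_def intro: f_cong g_cong)
  have F_add: "F t (\<lambda>v. x v + x' v) = F t x + F t x'" if "t < r1 + r2" for t x x'
    using that f_add g_add by (simp add: F_def)
  have F_dvd: "(\<forall>t<r1 + r2. int (D t) dvd F t x)
      \<longleftrightarrow> (\<forall>t<r1. int d1 dvd f t x) \<and> (\<forall>t<r2. int d2 dvd g t x)" for x
    unfolding all_less_add_iff by (simp add: D_def F_def)
  show "group (cyclic_sum d1 r1 d2 r2)"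
    by (simp add: H)
  show "\<psi> x = \<psi> x'" if "\<And>v. v \<in> V \<Longrightarrow> x v = x' v" for x x'
    unfolding \<psi>_def by (rule restrict_ext) (simp add: F_cong[OF _ that])
  show "\<psi> x \<in> carrier (cyclic_sum d1 r1 d2 r2)" for x
    by (simp add: H \<psi>_def mod_in_carrier_integer_mod_group)
  show "\<psi> (\<lambda>v. x v + x' v) = \<psi> x \<otimes>\<^bsub>cyclic_sum d1 r1 d2 r2\<^esub> \<psi> x'" for x x'
    unfolding H \<psi>_def by (simp, rule restrict_ext) (simp add: F_add mod_add_eq)
  show "\<exists>x. sum x V = 0 \<and> \<psi> x = h" if h: "h \<in> carrier (cyclic_sum d1 r1 d2 r2)" for h
  proof -
    obtain x where x: "sum x V = 0" "\<forall>t<r1. f t x = h t" "\<forall>t<r2. g t x = h (r1 + t)"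
      using surj[of h "\<lambda>t. h (r1 + t)"] by blast
    have "\<psi> x = h"
    proof (rule extensionalityI[where A = "{..<r1 + r2}"])
      show "\<psi> x \<in> extensional {..<r1 + r2}" by (simp add: \<psi>_def)
      show "h \<in> extensional {..<r1 + r2}" using h by (simp add: H PiE_def)
      fix t assume t: "t \<in> {..<r1 + r2}"
      then have "h t \<in> carrier (integer_mod_group (D t))" using h by (auto simp: H)
      moreover have "F t x = h t" using x t by (simp add: F_def)
      ultimately show "\<psi> x t = h t"
        using t by (simp add: \<psi>_def mod_carrier_integer_mod_group)
    qed
    then show ?thesis using x(1) by blast
  qed
  show "\<psi> x = \<one>\<^bsub>cyclic_sum d1 r1 d2 r2\<^esub> \<longleftrightarrow> (\<exists>y. \<forall>u\<in>V. x u = laplacian_map V m y u)"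
    if "sum x V = 0" for x
  proof -
    have "\<psi> x = \<one>\<^bsub>cyclic_sum d1 r1 d2 r2\<^esub> \<longleftrightarrow> (\<forall>t<r1 + r2. int (D t) dvd F t x)"
      unfolding H \<psi>_def by (simp add: fun_eq_iff mod_eq_0_iff_dvd)
    then show ?thesis using kernel[OF that] F_dvd by simp
  qed
qed

text \<open>Inverts the block \<open>[[n-1, 1], [1, n-1]]\<close> of determinant \<open>n(n-2)\<close> by which the Laplacian
  acts on a matched pair.\<close>
lemma block_solve:
  fixes n p q u v :: int
  assumes "n * (n - 2) \<noteq> 0"
    and "n * (n - 2) * p = (n - 1) * u - v" and "n * (n - 2) * q = (n - 1) * v - u"
  shows "(n - 1) * p + q = u"
proof -
  have "n * (n - 2) * ((n - 1) * p + q) = (n - 1) * (n * (n - 2) * p) + n * (n - 2) * q"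
    by (simp add: algebra_simps)
  also have "\<dots> = n * (n - 2) * u"
    unfolding assms(2,3) by (simp add: algebra_simps)
  finally show ?thesis
    using assms(1) by simp
qed

text \<open>\<open>w 0, \<dots>, w (r - 1)\<close> are the vertices not covered by the matching.\<close>
locale labelled_matching =
  fixes n k r :: nat and w a b :: "nat \<Rightarrow> nat"
  assumes n_eq: "n = r + 2 * k" and r_pos: "0 < r"
    and inj_w: "inj_on w {..<r}" and inj_a: "inj_on a {..<k}" and inj_b: "inj_on b {..<k}"
    and w_less: "\<And>j. j < r \<Longrightarrow> w j < n"
    and a_less: "\<And>i. i < k \<Longrightarrow> a i < n"
    and b_less: "\<And>i. i < k \<Longrightarrow> b i < n"
    and w_neq_a: "\<And>j i. j < r \<Longrightarrow> i < k \<Longrightarrow> w j \<noteq> a i"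
    and w_neq_b: "\<And>j i. j < r \<Longrightarrow> i < k \<Longrightarrow> w j \<noteq> b i"
    and a_neq_b: "\<And>i i'. i < k \<Longrightarrow> i' < k \<Longrightarrow> a i \<noteq> b i'"
begin

definition edges :: "nat set set" where
  "edges = (\<lambda>i. {a i, b i}) ` {..<k}"

abbreviation L :: "(nat \<Rightarrow> int) \<Rightarrow> nat \<Rightarrow> int" where
  "L \<equiv> laplacian_map {0..<n} (complete_minus_matching edges)"

abbreviation N :: int where
  "N \<equiv> int n * (int n - 2)"

lemma N_neq_zero: "k > 0 \<Longrightarrow> N \<noteq> 0"
  using n_eq r_pos by simp

lemma label_images_disjoint:
  "w ` {..<r} \<inter> a ` {..<k} = {}" "(w ` {..<r} \<union> a ` {..<k}) \<inter> b ` {..<k} = {}"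
  using w_neq_a w_neq_b a_neq_b by fastforce+

lemma vertices_eq: "{0..<n} = w ` {..<r} \<union> a ` {..<k} \<union> b ` {..<k}"
proof -
  have "card (w ` {..<r} \<union> a ` {..<k} \<union> b ` {..<k}) = card {0..<n}"
    using label_images_disjoint inj_w inj_a inj_b n_eq by (simp add: card_Un_disjoint card_image)
  moreover have "w ` {..<r} \<union> a ` {..<k} \<union> b ` {..<k} \<subseteq> {0..<n}"
    using w_less a_less b_less by auto
  ultimately show ?thesis by (intro card_subset_eq[symmetric]) auto
qed

lemma vertex_cases:
  assumes "u < n"
  obtains (unmatched) j where "j < r" "u = w j"
    | (matched_a) i where "i < k" "u = a i"
    | (matched_b) i where "i < k" "u = b i"
proof -
  have "u \<in> w ` {..<r} \<union> a ` {..<k} \<union> b ` {..<k}"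
    using assms vertices_eq by auto
  then show ?thesis using that by blast
qed

lemma sum_vertices:
  "sum f {0..<n} = (\<Sum>j<r. f (w j)) + (\<Sum>i<k. f (a i)) + (\<Sum>i<k. f (b i))"
proof -
  have "sum f {0..<n} = sum f (w ` {..<r}) + sum f (a ` {..<k}) + sum f (b ` {..<k})"
    unfolding vertices_eq using label_images_disjoint by (simp add: sum.union_disjoint)
  then show ?thesis using inj_w inj_a inj_b by (simp add: sum.reindex)
qed

lemma exists_vertex_function:
  obtains x where "\<And>j. j < r \<Longrightarrow> x (w j) = p j"
    and "\<And>i. i < k \<Longrightarrow> x (a i) = q i" and "\<And>i. i < k \<Longrightarrow> x (b i) = q' i"
proof
  define x where "x v =
    (if v \<in> w ` {..<r} then p (the_inv_into {..<r} w v)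
     else if v \<in> a ` {..<k} then q (the_inv_into {..<k} a v)
     else q' (the_inv_into {..<k} b v))" for v
  show "x (w j) = p j" if "j < r" for j
    using that inj_w by (simp add: x_def the_inv_into_f_f)
  show "x (a i) = q i" if "i < k" for i
  proof -
    have "a i \<notin> w ` {..<r}" using that w_neq_a by fastforce
    then show ?thesis using that inj_a by (simp add: x_def the_inv_into_f_f)
  qed
  show "x (b i) = q' i" if "i < k" for i
  proof -
    have "b i \<notin> w ` {..<r} \<union> a ` {..<k}" using that w_neq_b a_neq_b by fastforce
    then show ?thesis using that inj_b by (simp add: x_def the_inv_into_f_f)
  qed
qed

lemma complete_minus_matching_sym:
  "complete_minus_matching edges u v = complete_minus_matching edges v u"
  by (simp add: complete_minus_matching_def insert_commute)

lemma edges_w: "j < r \<Longrightarrow> {w j, v} \<notin> edges"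
  using w_neq_a w_neq_b by (auto simp: edges_def doubleton_eq_iff)

lemma edges_a: "i < k \<Longrightarrow> {a i, v} \<in> edges \<longleftrightarrow> v = b i"
  using a_neq_b by (auto simp: edges_def doubleton_eq_iff inj_on_eq_iff[OF inj_a])

lemma edges_b: "i < k \<Longrightarrow> {b i, v} \<in> edges \<longleftrightarrow> v = a i"
  using a_neq_b by (auto simp: edges_def doubleton_eq_iff inj_on_eq_iff[OF inj_b])
    (metis a_neq_b)

lemma L_w:
  assumes "j < r"
  shows "L y (w j) = int n * y (w j) - sum y {0..<n}"
proof -
  have "L y (w j) = int (card {0..<n}) * y (w j) - sum y {0..<n} - (\<Sum>v\<in>{}. y (w j) - y v)"
    using w_less[OF assms] edges_w[OF assms]
    by (intro laplacian_map_almost_complete) (auto simp: complete_minus_matching_def)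
  then show ?thesis by simp
qed

lemma L_a:
  assumes "i < k"
  shows "L y (a i) = int n * y (a i) - sum y {0..<n} - (y (a i) - y (b i))"
proof -
  have "L y (a i) = int (card {0..<n}) * y (a i) - sum y {0..<n} - (\<Sum>v\<in>{b i}. y (a i) - y v)"
    using a_less[OF assms] b_less[OF assms] a_neq_b[OF assms assms] edges_a[OF assms]
    by (intro laplacian_map_almost_complete) (auto simp: complete_minus_matching_def)
  then show ?thesis by simp
qed

lemma L_b:
  assumes "i < k"
  shows "L y (b i) = int n * y (b i) - sum y {0..<n} - (y (b i) - y (a i))"
proof -
  have "L y (b i) = int (card {0..<n}) * y (b i) - sum y {0..<n} - (\<Sum>v\<in>{a i}. y (b i) - y v)"
    using a_less[OF assms] b_less[OF assms] a_neq_b[OF assms assms] edges_b[OF assms]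
    by (intro laplacian_map_almost_complete) (auto simp: complete_minus_matching_def)
  then show ?thesis by simp
qed

text \<open>\<open>c\<close> stands for \<open>-\<Sum>y\<close>, where \<open>y\<close> is a preimage of \<open>x\<close> under the Laplacian.\<close>
definition image_condition :: "(nat \<Rightarrow> int) \<Rightarrow> int \<Rightarrow> bool" where
  "image_condition x c \<longleftrightarrow>
     (\<forall>j<r. int n dvd x (w j) - c) \<and>
     (\<forall>i<k. N dvd (int n - 1) * (x (b i) - c) - (x (a i) - c))"

lemma image_condition_shift:
  assumes "image_condition x c" and "int n dvd c' - c"
  shows "image_condition x c'"
proof -
  obtain t where t: "c' - c = int n * t" using assms(2) by (elim dvdE)
  show ?thesis
    unfolding image_condition_def
  proof (intro conjI allI impI)
    fix j assume "j < r"
    then have "int n dvd (x (w j) - c) - int n * t"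
      using assms(1) by (simp add: image_condition_def)
    also have "(x (w j) - c) - int n * t = x (w j) - c'"
      using t by simp
    finally show "int n dvd x (w j) - c'" .
  next
    fix i assume "i < k"
    then have "N dvd ((int n - 1) * (x (b i) - c) - (x (a i) - c)) - N * t"
      using assms(1) by (simp add: image_condition_def)
    also have "((int n - 1) * (x (b i) - c) - (x (a i) - c)) - N * t
        = (int n - 1) * (x (b i) - c') - (x (a i) - c')"
      using t by (simp add: algebra_simps)
    finally show "N dvd (int n - 1) * (x (b i) - c') - (x (a i) - c')" .
  qed
qed

text \<open>Modulo \<open>n\<close> every matched pair sums to \<open>2 c\<close>, so a zero sum forces the remaining
  unmatched vertex to be congruent to \<open>c\<close> as well.\<close>
lemma image_condition_if_sum_zero:
  assumes sum_x: "sum x {0..<n} = 0" and j0: "j0 < r"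
    and unmatched: "\<And>j. j < r \<Longrightarrow> j \<noteq> j0 \<Longrightarrow> int n dvd x (w j) - c"
    and matched: "\<And>i. i < k \<Longrightarrow> N dvd (int n - 1) * (x (b i) - c) - (x (a i) - c)"
  shows "image_condition x c"
proof -
  have pair: "int n dvd (x (a i) - c) + (x (b i) - c)" if "i < k" for i
  proof -
    have "int n dvd (int n - 1) * (x (b i) - c) - (x (a i) - c)"
      using matched[OF that] by (rule dvd_mult_left)
    then have "int n dvd int n * (x (b i) - c) - ((int n - 1) * (x (b i) - c) - (x (a i) - c))"
      by (simp add: dvd_diff)
    also have "int n * (x (b i) - c) - ((int n - 1) * (x (b i) - c) - (x (a i) - c))
        = (x (a i) - c) + (x (b i) - c)"
      by (simp add: algebra_simps)
    finally show ?thesis .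
  qed
  have "(\<Sum>j<r. x (w j) - c) + (\<Sum>i<k. (x (a i) - c) + (x (b i) - c)) = sum x {0..<n} - int n * c"
    using sum_vertices[of x] n_eq by (simp add: sum_subtractf sum.distrib algebra_simps)
  moreover have "(\<Sum>j<r. x (w j) - c) = (x (w j0) - c) + (\<Sum>j\<in>{..<r} - {j0}. x (w j) - c)"
    using j0 by (simp add: sum.remove)
  ultimately have "x (w j0) - c
      = - int n * c - (\<Sum>j\<in>{..<r} - {j0}. x (w j) - c) - (\<Sum>i<k. (x (a i) - c) + (x (b i) - c))"
    using sum_x by simp
  moreover have "int n dvd (\<Sum>j\<in>{..<r} - {j0}. x (w j) - c)"
    using unmatched by (intro dvd_sum) auto
  moreover have "int n dvd (\<Sum>i<k. (x (a i) - c) + (x (b i) - c))"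
    using pair by (intro dvd_sum) auto
  ultimately have "int n dvd x (w j0) - c"
    by (simp add: dvd_diff)
  then show ?thesis
    using unmatched matched unfolding image_condition_def by (metis (no_types))
qed

lemma image_condition_laplacian:
  assumes x: "\<And>u. u < n \<Longrightarrow> x u = L y u"
  shows "image_condition x (- sum y {0..<n})"
  unfolding image_condition_def
proof (intro conjI allI impI)
  fix j assume "j < r"
  then have "x (w j) - - sum y {0..<n} = int n * y (w j)"
    using x[OF w_less] L_w by simp
  then show "int n dvd x (w j) - - sum y {0..<n}" by simp
next
  fix i assume i: "i < k"
  have "(int n - 1) * (x (b i) - - sum y {0..<n}) - (x (a i) - - sum y {0..<n}) = N * y (b i)"
    unfolding x[OF a_less[OF i]] x[OF b_less[OF i]] L_a[OF i] L_b[OF i]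
    by (simp add: algebra_simps)
  then show "N dvd (int n - 1) * (x (b i) - - sum y {0..<n}) - (x (a i) - - sum y {0..<n})"
    by simp
qed

lemma laplacian_preimage:
  assumes sum_x: "sum x {0..<n} = 0" and c: "image_condition x c"
  shows "\<exists>y. \<forall>u\<in>{0..<n}. x u = L y u"
proof -
  define pa where "pa i = (int n - 1) * (x (a i) - c) - (x (b i) - c)" for i
  define pb where "pb i = (int n - 1) * (x (b i) - c) - (x (a i) - c)" for i
  have pb_dvd: "N dvd pb i" if "i < k" for i
    using c that by (simp add: image_condition_def pb_def)
  have pa_dvd: "N dvd pa i" if "i < k" for i
  proof -
    have "pa i = N * (x (b i) - c) - (int n - 1) * pb i"
      by (simp add: pa_def pb_def algebra_simps)
    then show ?thesis using pb_dvd[OF that] by (simp add: dvd_diff)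
  qed
  obtain y where y_w: "\<And>j. j < r \<Longrightarrow> y (w j) = (x (w j) - c) div int n"
    and y_a: "\<And>i. i < k \<Longrightarrow> y (a i) = pa i div N"
    and y_b: "\<And>i. i < k \<Longrightarrow> y (b i) = pb i div N"
    using exists_vertex_function[where p = "\<lambda>j. (x (w j) - c) div int n"
        and q = "\<lambda>i. pa i div N" and q' = "\<lambda>i. pb i div N"] by blast
  have Ny_a: "N * y (a i) = pa i" and Ny_b: "N * y (b i) = pb i" if "i < k" for i
    using y_a[OF that] y_b[OF that] pa_dvd[OF that] pb_dvd[OF that] by simp_all
  have y_pair: "(int n - 1) * y (a i) + y (b i) = x (a i) - c"
    "(int n - 1) * y (b i) + y (a i) = x (b i) - c" if "i < k" for i
  proof -
    have "N \<noteq> 0" using N_neq_zero that by simp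
    then show "(int n - 1) * y (a i) + y (b i) = x (a i) - c"
      "(int n - 1) * y (b i) + y (a i) = x (b i) - c"
      using Ny_a[OF that] Ny_b[OF that] unfolding pa_def pb_def by (simp_all add: block_solve)
  qed
  define S where "S = sum y {0..<n}"
  have L_y: "L y u = x u - c - S" if "u < n" for u
    using that
  proof (cases rule: vertex_cases)
    case (unmatched j)
    then show ?thesis
      using c L_w[of j y] y_w[of j] by (simp add: image_condition_def S_def)
  next
    case (matched_a i)
    then show ?thesis
      using L_a[OF matched_a(1), of y] y_pair(1)[OF matched_a(1)] by (simp add: S_def algebra_simps)
  next
    case (matched_b i)
    then show ?thesis
      using L_b[OF matched_b(1), of y] y_pair(2)[OF matched_b(1)] by (simp add: S_def algebra_simps)
  qed
  have "0 = sum (L y) {0..<n}"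
    using sum_laplacian_map[of "{0..<n}"] complete_minus_matching_sym by simp
  also have "\<dots> = (\<Sum>u\<in>{0..<n}. x u - c - S)"
    using L_y by (intro sum.cong) auto
  also have "\<dots> = - int n * (c + S)"
    using sum_x by (simp add: sum_subtractf algebra_simps)
  finally have "c + S = 0"
    using n_eq r_pos by simp
  then have "\<forall>u\<in>{0..<n}. x u = L y u"
    using L_y by simp
  then show ?thesis by blast
qed

lemma laplacian_image_iff:
  assumes "sum x {0..<n} = 0"
  shows "(\<exists>y. \<forall>u\<in>{0..<n}. x u = L y u) \<longleftrightarrow> (\<exists>c. image_condition x c)"
proof
  assume "\<exists>y. \<forall>u\<in>{0..<n}. x u = L y u"
  then obtain y where "\<And>u. u < n \<Longrightarrow> x u = L y u" by auto
  then have "image_condition x (- sum y {0..<n})" by (rule image_condition_laplacian)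
  then show "\<exists>c. image_condition x c" ..
qed (use laplacian_preimage[OF assms] in blast)

definition pair_value :: "(nat \<Rightarrow> int) \<Rightarrow> nat \<Rightarrow> int" where
  "pair_value x i = x (a i) - (int n - 1) * x (b i)"

lemma pair_value_eq:
  "(int n - 1) * (x (b i) - c) - (x (a i) - c) = - (pair_value x i + (int n - 2) * c)"
  by (simp add: pair_value_def algebra_simps)

lemma image_condition_iff_two_unmatched:
  assumes r: "2 \<le> r" and sum_x: "sum x {0..<n} = 0"
  shows "(\<exists>c. image_condition x c) \<longleftrightarrow>
    (\<forall>t<r - 2. int n dvd x (w t) - x (w (r - 2))) \<and>
    (\<forall>i<k. N dvd pair_value x i + (int n - 2) * x (w (r - 2)))"
    (is "_ \<longleftrightarrow> ?unmatched \<and> ?matched")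
proof
  assume "\<exists>c. image_condition x c"
  then obtain c where c: "image_condition x c" ..
  then have "int n dvd x (w (r - 2)) - c"
    using r by (simp add: image_condition_def)
  then have "image_condition x (x (w (r - 2)))"
    by (rule image_condition_shift[OF c])
  then show "?unmatched \<and> ?matched"
    by (simp add: image_condition_def pair_value_eq dvd_minus_diff_iff)
next
  assume conds: "?unmatched \<and> ?matched"
  have "int n dvd x (w j) - x (w (r - 2))" if "j < r" "j \<noteq> r - 1" for j
  proof (cases "j < r - 2")
    case True
    then show ?thesis using conds by simp
  next
    case False
    then have "j = r - 2" using that by simp
    then show ?thesis by simp
  qed
  moreover have "N dvd (int n - 1) * (x (b i) - x (w (r - 2))) - (x (a i) - x (w (r - 2)))"
    if "i < k" for i
    using conds that by (simp add: pair_value_eq dvd_minus_diff_iff)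
  ultimately have "image_condition x (x (w (r - 2)))"
    using image_condition_if_sum_zero[OF sum_x, of "r - 1"] r by simp
  then show "\<exists>c. image_condition x c" ..
qed

lemma critical_group_iso_two_unmatched:
  assumes r: "2 \<le> r" and s: "s < n"
  shows "critical_group {0..<n} (complete_minus_matching edges) s
    \<cong> cyclic_sum n (r - 2) (n * (n - 2)) k"
proof -
  define F1 where "F1 t x = x (w t) - x (w (r - 2))" for t and x :: "nat \<Rightarrow> int"
  define F2 where "F2 i x = pair_value x i + (int n - 2) * x (w (r - 2))"
    for i and x :: "nat \<Rightarrow> int"
  have N_eq: "int (n * (n - 2)) = N"
    using n_eq r by (simp add: of_nat_diff)
  show ?thesis
  proof (rule critical_group_iso_cyclic_sumI[where f = F1 and g = F2])
    show "\<exists>x. sum x {0..<n} = 0 \<and> (\<forall>t<r - 2. F1 t x = h1 t) \<and> (\<forall>t<k. F2 t x = h2 t)"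
      for h1 h2
    proof -
      define m where "m = r - 2"
      have r_eq: "r = Suc (Suc m)" using r by (simp add: m_def)
      define T where "T = (\<Sum>j<m. h1 j) + (\<Sum>i<k. h2 i)"
      obtain x where
        x_w: "\<And>j. j < r \<Longrightarrow> x (w j) = (if j < m then h1 j else if j = m then 0 else - T)"
        and x_a: "\<And>i. i < k \<Longrightarrow> x (a i) = h2 i" and x_b: "\<And>i. i < k \<Longrightarrow> x (b i) = 0"
        using exists_vertex_function[where q = h2 and q' = "\<lambda>_. 0"
            and p = "\<lambda>j. if j < m then h1 j else if j = m then 0 else - T"] by blast
      have "(\<Sum>j<r. x (w j)) = (\<Sum>j<m. h1 j) - T"
        using x_w unfolding r_eq by simp
      then have "sum x {0..<n} = 0"
        using x_a x_b by (simp add: sum_vertices T_def)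
      moreover have "\<forall>t<r - 2. F1 t x = h1 t" "\<forall>t<k. F2 t x = h2 t"
        using x_w x_a x_b r_eq by (simp_all add: F1_def F2_def pair_value_def)
      ultimately show ?thesis by blast
    qed
    show "(\<forall>t<r - 2. int n dvd F1 t x) \<and> (\<forall>t<k. int (n * (n - 2)) dvd F2 t x)
        \<longleftrightarrow> (\<exists>y. \<forall>u\<in>{0..<n}. x u = L y u)"
      if "sum x {0..<n} = 0" for x
      unfolding N_eq F1_def F2_def
      using image_condition_iff_two_unmatched[OF r that] laplacian_image_iff[OF that] by simp
  qed (use s r w_less a_less b_less complete_minus_matching_sym in
      \<open>auto simp: F1_def F2_def pair_value_def algebra_simps\<close>)
qed

lemma image_condition_iff_one_unmatched:
  assumes r: "r = 1" and k: "0 < k" and sum_x: "sum x {0..<n} = 0"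
  shows "(\<exists>c. image_condition x c) \<longleftrightarrow>
    int n - 2 dvd pair_value x 0 \<and> (\<forall>t<k - 1. N dvd pair_value x (Suc t) - pair_value x 0)"
    (is "_ \<longleftrightarrow> ?first \<and> ?rest")
proof
  assume "\<exists>c. image_condition x c"
  then obtain c where "image_condition x c" ..
  then have c: "N dvd pair_value x i + (int n - 2) * c" if "i < k" for i
    using that by (simp add: image_condition_def pair_value_eq dvd_minus_diff_iff)
  have "int n - 2 dvd pair_value x 0 + (int n - 2) * c"
    using c[OF k] by (rule dvd_mult_right)
  then have ?first
    by (simp add: dvd_add_left_iff)
  moreover have ?rest
    using dvd_diff[OF c c[OF k]] by simp
  ultimately show "?first \<and> ?rest" ..
next
  assume "?first \<and> ?rest"
  then have ?first and rest: ?rest by simp_all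
  then obtain m where m: "pair_value x 0 = (int n - 2) * m"
    by (auto elim: dvdE)
  have "N dvd (int n - 1) * (x (b i) - - m) - (x (a i) - - m)" if "i < k" for i
  proof -
    have "N dvd pair_value x i - pair_value x 0"
      using rest that by (cases i) auto
    moreover have "(int n - 1) * (x (b i) - - m) - (x (a i) - - m)
        = - (pair_value x i - pair_value x 0)"
      unfolding pair_value_eq m by (simp add: algebra_simps)
    ultimately show ?thesis
      by (simp add: dvd_diff_commute)
  qed
  then have "image_condition x (- m)"
    using image_condition_if_sum_zero[OF sum_x, of 0] r by auto
  then show "\<exists>c. image_condition x c" ..
qed

lemma critical_group_iso_one_unmatched:
  assumes r: "r = 1" and k: "0 < k" and s: "s < n"
  shows "critical_group {0..<n} (complete_minus_matching edges) s
    \<cong> cyclic_sum (n - 2) 1 (n * (n - 2)) (k - 1)"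
proof -
  define F1 where "F1 t x = pair_value x 0" for t :: nat and x
  define F2 where "F2 t x = pair_value x (Suc t) - pair_value x 0" for t x
  have n2: "int (n - 2) = int n - 2"
    using n_eq k by simp
  show ?thesis
  proof (rule critical_group_iso_cyclic_sumI[where f = F1 and g = F2])
    show "\<exists>x. sum x {0..<n} = 0 \<and> (\<forall>t<1. F1 t x = h1 t) \<and> (\<forall>t<k - 1. F2 t x = h2 t)"
      for h1 h2
    proof -
      define q where "q i = (if i = 0 then h1 0 else h2 (i - 1) + h1 0)" for i
      obtain x where x_w: "\<And>j. j < r \<Longrightarrow> x (w j) = - (\<Sum>i<k. q i)"
        and x_a: "\<And>i. i < k \<Longrightarrow> x (a i) = q i" and x_b: "\<And>i. i < k \<Longrightarrow> x (b i) = 0"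
        using exists_vertex_function[where p = "\<lambda>_. - (\<Sum>i<k. q i)" and q = q
            and q' = "\<lambda>_. 0"] by blast
      have "sum x {0..<n} = 0"
        using x_w x_a x_b r by (simp add: sum_vertices)
      moreover have "\<forall>t<1. F1 t x = h1 t" "\<forall>t<k - 1. F2 t x = h2 t"
        using x_a x_b k by (simp_all add: F1_def F2_def pair_value_def q_def)
      ultimately show ?thesis by blast
    qed
    show "(\<forall>t<1. int (n - 2) dvd F1 t x) \<and> (\<forall>t<k - 1. int (n * (n - 2)) dvd F2 t x)
        \<longleftrightarrow> (\<exists>y. \<forall>u\<in>{0..<n}. x u = L y u)"
      if "sum x {0..<n} = 0" for x
      unfolding of_nat_mult n2 F1_def F2_def
      using image_condition_iff_one_unmatched[OF r k that] laplacian_image_iff[OF that] by simp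
  qed (use s k a_less b_less complete_minus_matching_sym in
      \<open>auto simp: F1_def F2_def pair_value_def algebra_simps\<close>)
qed

end

lemma card_2_eq_Min_Max:
  assumes "card (e :: 'a :: linorder set) = 2"
  shows "e = {Min e, Max e}" and "Min e \<noteq> Max e"
proof -
  obtain x y where e: "e = {x, y}" "x \<noteq> y"
    using card_2_iff[THEN iffD1, OF assms] by blast
  then show "e = {Min e, Max e}" "Min e \<noteq> Max e"
    by (cases "x < y"; auto simp: min_def max_def)+
qed

lemma card_Union_matching:
  assumes "is_matching n M"
  shows "card (\<Union>M) = 2 * card M"
proof -
  have "pairwise disjnt M" and edges: "\<And>e. e \<in> M \<Longrightarrow> finite e \<and> card e = 2"
    using assms by (auto simp: is_matching_def pairwise_def disjnt_def card_ge_0_finite)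
  then have "card (\<Union>M) = sum card M"
    by (intro card_Union_disjoint) auto
  also have "\<dots> = 2 * card M"
    using edges by simp
  finally show ?thesis .
qed

lemma matching_labelling_exists:
  assumes M: "is_matching n M" and k: "card M = k" and n: "2 * k < n"
  obtains w a b where "labelled_matching n k (n - 2 * k) w a b"
    and "M = (\<lambda>i. {a i, b i}) ` {..<k}"
proof -
  have edges: "\<And>e. e \<in> M \<Longrightarrow> e \<subseteq> {0..<n} \<and> card e = 2"
    and disj: "\<And>e e'. e \<in> M \<Longrightarrow> e' \<in> M \<Longrightarrow> e \<noteq> e' \<Longrightarrow> e \<inter> e' = {}"
    using M by (auto simp: is_matching_def)
  have "finite M"
    using edges by (intro finite_subset[of M "Pow {0..<n}"]) auto
  then obtain e where e: "bij_betw e {..<k} M"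
    using ex_bij_betw_nat_finite k by (metis atLeast0LessThan)
  define a where "a i = Min (e i)" for i
  define b where "b i = Max (e i)" for i
  have e_in: "e i \<in> M" if "i < k" for i
    using e that by (auto simp: bij_betw_def)
  have e_eq: "e i = {a i, b i}" and a_neq_b: "a i \<noteq> b i" if "i < k" for i
    using card_2_eq_Min_Max edges[OF e_in[OF that]] by (auto simp: a_def b_def)
  have e_unique: "i = i'" if "i < k" "i' < k" "v \<in> e i" "v \<in> e i'" for i i' v
  proof (rule ccontr)
    assume "i \<noteq> i'"
    then have "e i \<noteq> e i'"
      using e that(1,2) by (auto simp: bij_betw_def dest: inj_onD)
    then show False
      using disj[OF e_in[OF that(1)] e_in[OF that(2)]] that(3,4) by blast
  qed
  define U where "U = {0..<n} - \<Union>M"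
  have "\<Union>M \<subseteq> {0..<n}"
    using edges by auto
  then have "card U = n - 2 * k"
    using card_Union_matching[OF M] k by (simp add: U_def card_Diff_subset finite_subset)
  then obtain w where w: "bij_betw w {..<n - 2 * k} U"
    using ex_bij_betw_nat_finite[of U] by (metis U_def atLeast0LessThan finite_Diff finite_atLeastLessThan)
  have w_in: "w j \<in> U" if "j < n - 2 * k" for j
    using w that by (auto simp: bij_betw_def)
  have ab_in: "a i \<in> e i" "b i \<in> e i" "e i \<subseteq> \<Union>M" if "i < k" for i
    using e_eq[OF that] e_in[OF that] by auto
  have "labelled_matching n k (n - 2 * k) w a b"
  proof
    show "n = n - 2 * k + 2 * k" "0 < n - 2 * k" using n by simp_all
    show "inj_on w {..<n - 2 * k}" using w by (simp add: bij_betw_def)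
    show "inj_on a {..<k}"
      by (rule inj_onI) (metis ab_in(1) e_unique lessThan_iff)
    show "inj_on b {..<k}"
      by (rule inj_onI) (metis ab_in(2) e_unique lessThan_iff)
    show "w j < n" if "j < n - 2 * k" for j
      using w_in[OF that] by (simp add: U_def)
    show "a i < n" "b i < n" if "i < k" for i
      using ab_in[OF that] edges[OF e_in[OF that]] by auto
    show "w j \<noteq> a i" "w j \<noteq> b i" if "j < n - 2 * k" "i < k" for j i
      using w_in[OF that(1)] ab_in[OF that(2)] by (auto simp: U_def)
    show "a i \<noteq> b i'" if "i < k" "i' < k" for i i'
      using e_unique[OF that] ab_in[OF that(1)] ab_in[OF that(2)] a_neq_b[OF that(1)] by metis
  qed
  moreover have "M = (\<lambda>i. {a i, b i}) ` {..<k}"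
    using e e_eq by (auto simp: bij_betw_def)
  ultimately show ?thesis using that by blast
qed

theorem proposition5p2:
  fixes n k s :: nat and M :: "nat set set"
  assumes "is_matching n M" and "card M = k" and "s < n"
  shows "(2 * k + 2 \<le> n \<longrightarrow>
            critical_group {0..<n} (complete_minus_matching M) s
              \<cong> cyclic_sum n (n - 2 * k - 2) (n * (n - 2)) k)
       \<and> (n = 2 * k + 1 \<and> k \<ge> 1 \<longrightarrow>
            critical_group {0..<n} (complete_minus_matching M) s
              \<cong> cyclic_sum (n - 2) 1 (n * (n - 2)) (k - 1))"
proof (intro conjI impI)
  assume n: "2 * k + 2 \<le> n"
  then have "2 * k < n" by simp
  then obtain w a b where "labelled_matching n k (n - 2 * k) w a b"
    and M: "M = (\<lambda>i. {a i, b i}) ` {..<k}"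
    by (rule matching_labelling_exists[OF assms(1,2)])
  then interpret labelled_matching n k "n - 2 * k" w a b by simp
  show "critical_group {0..<n} (complete_minus_matching M) s
      \<cong> cyclic_sum n (n - 2 * k - 2) (n * (n - 2)) k"
    using critical_group_iso_two_unmatched n assms(3) by (simp add: M edges_def)
next
  assume n: "n = 2 * k + 1 \<and> k \<ge> 1"
  then have "2 * k < n" by simp
  then obtain w a b where "labelled_matching n k (n - 2 * k) w a b"
    and M: "M = (\<lambda>i. {a i, b i}) ` {..<k}"
    by (rule matching_labelling_exists[OF assms(1,2)])
  then interpret labelled_matching n k "n - 2 * k" w a b by simp
  show "critical_group {0..<n} (complete_minus_matching M) s
      \<cong> cyclic_sum (n - 2) 1 (n * (n - 2)) (k - 1)"
    using critical_group_iso_one_unmatched n assms(3) by (simp add: M edges_def)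
qed

end
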